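(* A division ring $D$ is locally finite if and only if $D$ is weakly locally finite and algebraic over its center.
   Context: Let $D$ have center $F$. $D$ is locally finite if for every finite subset $S\subseteq D$, the division subring $F(S)$ generated by $S$ over $F$ is finite dimensional over $F$. $D$ is weakly locally finite if for every finite subset $S\subseteq D$, the division subring generated by $S$ is finite dimensional over its own center. $D$ is algebraic if every element of $D$ is algebraic over $F$. *)

theory Defs
  imports Main
begin

definition center :: "'a::division_ring set \<Rightarrow> 'a set" where
  "center E = {z \<in> E. \<forall>x\<in>E. z * x = x * z}"

definition division_subring :: "'a::division_ring set \<Rightarrow> bool" where
  "division_subring E \<longleftrightarrow> 0 \<in> E \<and> 1 \<in> E \<and>
     (\<forall>x\<in>E. \<forall>y\<in>E. x + y \<in> E \<and> x * y \<in> E) \<and>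
     (\<forall>x\<in>E. - x \<in> E \<and> inverse x \<in> E)"

definition gen_div_subring :: "'a::division_ring set \<Rightarrow> 'a set" where
  "gen_div_subring S = \<Inter> {E. division_subring E \<and> S \<subseteq> E}"

definition fin_dim_over :: "'a::division_ring set \<Rightarrow> 'a set \<Rightarrow> bool" where
  "fin_dim_over K A \<longleftrightarrow> (\<exists>B. finite B \<and> B \<subseteq> A \<and>
      (\<forall>a\<in>A. \<exists>c. (\<forall>b\<in>B. c b \<in> K) \<and> a = (\<Sum>b\<in>B. c b * b)))"

definition locally_finite :: "'a::division_ring itself \<Rightarrow> bool" where
  "locally_finite _ \<longleftrightarrow> (\<forall>S::'a set. finite S \<longrightarrow>
      fin_dim_over (center UNIV) (gen_div_subring (center UNIV \<union> S)))"

definition weakly_locally_finite :: "'a::division_ring itself \<Rightarrow> bool" where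
  "weakly_locally_finite _ \<longleftrightarrow> (\<forall>S::'a set. finite S \<longrightarrow>
      fin_dim_over (center (gen_div_subring S)) (gen_div_subring S))"

text \<open>x is algebraic over the subfield K: root of a nonzero polynomial with coefficients in K
  (K central, so the side of the coefficients is irrelevant).\<close>
definition algebraic_over :: "'a::division_ring set \<Rightarrow> 'a \<Rightarrow> bool" where
  "algebraic_over K x \<longleftrightarrow> (\<exists>n c. (\<forall>i\<le>n. c i \<in> K) \<and> (\<exists>i\<le>n. c i \<noteq> 0) \<and>
      (\<Sum>i\<le>n. c i * x ^ i) = 0)"

definition algebraic_dr :: "'a::division_ring itself \<Rightarrow> bool" where
  "algebraic_dr _ \<longleftrightarrow> (\<forall>x::'a. algebraic_over (center UNIV) x)"

end

theory Submission
  imports Defs "HOL-Algebra.Finite_Extensions"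
begin

text \<open>Write Z for the centre of the division ring and, for finite S, D for the division
  subring generated by S and F for its centre.

  If every Z(S) is finite-dimensional over Z, each x is algebraic because its powers lie in
  Z(x). Moreover, elements of D that are independent over F stay independent over Z: writing a
  Z-relation in an F-basis of the span of its (central) coefficients gives a relation
  with coefficients in D on F-independent elements commuting with D, and a shortest such relation,
  normalised to contain a coefficient 1, has central coefficients, since commuting it with any
  element of D gives a shorter one. Hence [D : F] is at most [Z(S) : Z].

  Conversely, take an F-basis of D. The structure constants of this basis and the
  coordinates of S are finitely many elements of F, algebraic over Z; they lie in the field
  formed by the centre of the centraliser of D, so they generate a finite extension A of Z
  there. The A-span of the basis is a ring, finite-dimensional over Z and without zero divisors,
  hence a division ring; it contains Z and S, so Z(S) is finite-dimensional.\<close>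

text \<open>The type viewed as a HOL-Algebra ring record, so that the linear algebra of
  Embedded_Algebras (spans, independence and dimension over a subfield, scalars acting on
  the left) and the finite extensions of Finite_Extensions become available.\<close>

definition DR :: "'a::division_ring ring" where
  "DR = \<lparr>carrier = UNIV, monoid.mult = (*), one = 1, ring.zero = 0, add = (+)\<rparr>"

lemma DR_simps [simp]:
  "carrier DR = UNIV" "mult DR = (*)" "one DR = 1" "zero DR = 0" "add DR = (+)"
  by (simp_all add: DR_def)

lemma ring_DR: "ring (DR::'a::division_ring ring)"
proof -
  have "\<exists>y. x + y = 0" for x :: 'a
    using add.right_inverse by blast
  thus ?thesis
    unfolding DR_def by unfold_locales (auto simp: algebra_simps Units_def)
qed

interpretation R: ring "DR::'a::division_ring ring"
  by (rule ring_DR)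

lemma DR_a_inv [simp]: "a_inv DR x = - (x::'a::division_ring)"
  by (rule R.minus_equality) simp_all

lemma DR_nat_pow [simp]: "x [^]\<^bsub>DR\<^esub> (n::nat) = (x::'a::division_ring) ^ n"
  by (induct n) (simp_all add: power_commutes)

subsection \<open>Division subrings, centres and commutants\<close>

lemma division_subringD:
  assumes "division_subring E"
  shows "0 \<in> E" "1 \<in> E" "x \<in> E \<Longrightarrow> y \<in> E \<Longrightarrow> x + y \<in> E" "x \<in> E \<Longrightarrow> y \<in> E \<Longrightarrow> x * y \<in> E"
    "x \<in> E \<Longrightarrow> - x \<in> E" "x \<in> E \<Longrightarrow> inverse x \<in> E" "x \<in> E \<Longrightarrow> y \<in> E \<Longrightarrow> x - y \<in> E"
proof -
  note E = assms[unfolded division_subring_def]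
  show "0 \<in> E" "1 \<in> E" using E by blast+
  show "x + y \<in> E" "x * y \<in> E" if "x \<in> E" "y \<in> E" using E that by blast+
  show "- x \<in> E" "inverse x \<in> E" if "x \<in> E" using E that by blast+
  show "x - y \<in> E" if "x \<in> E" "y \<in> E"
    using E that unfolding diff_conv_add_uminus by blast
qed

lemma division_subring_Inter:
  "(\<And>E. E \<in> \<E> \<Longrightarrow> division_subring E) \<Longrightarrow> division_subring (\<Inter> \<E>)"
  unfolding division_subring_def by blast

lemma division_subring_gen_div_subring: "division_subring (gen_div_subring S)"
  unfolding gen_div_subring_def by (rule division_subring_Inter) auto

lemma gen_div_subring_incl: "S \<subseteq> gen_div_subring S"
  unfolding gen_div_subring_def by auto

lemma gen_div_subring_minimal:
  "division_subring E \<Longrightarrow> S \<subseteq> E \<Longrightarrow> gen_div_subring S \<subseteq> E"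
  unfolding gen_div_subring_def by auto

lemma gen_div_subring_mono: "S \<subseteq> T \<Longrightarrow> gen_div_subring S \<subseteq> gen_div_subring T"
  using gen_div_subring_minimal[OF division_subring_gen_div_subring] gen_div_subring_incl by blast

lemma division_subring_UNIV: "division_subring (UNIV::'a::division_ring set)"
  unfolding division_subring_def by auto

lemma division_subring_power: "division_subring E \<Longrightarrow> x \<in> E \<Longrightarrow> x ^ n \<in> E"
  by (induct n) (auto simp: division_subring_def)

lemma division_subring_sum:
  assumes "division_subring E" "\<And>i. i \<in> A \<Longrightarrow> g i \<in> E"
  shows "sum g A \<in> E"
  using assms(2) by (induct A rule: infinite_finite_induct)
    (use assms(1) in \<open>auto simp: division_subring_def\<close>)

lemma division_subring_imp_subring: "division_subring E \<Longrightarrow> subring E DR"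
  by (rule R.subringI) (auto simp: division_subring_def)

lemma division_subring_imp_subalgebra:
  assumes "division_subring E" "K \<subseteq> E" shows "subalgebra K E DR"
proof -
  have "subgroup E (add_monoid DR)"
    using division_subring_imp_subring[OF assms(1)] by (simp add: subring_def)
  thus ?thesis
    using assms unfolding subalgebra_def subalgebra_axioms_def division_subring_def by auto
qed

definition commutant :: "'a::division_ring set \<Rightarrow> 'a set" where
  "commutant A = {a. \<forall>d\<in>A. a * d = d * a}"

lemma division_subring_commutant: "division_subring (commutant A)"
proof -
  have "x * y * d = d * (x * y)" if "x * d = d * x" "y * d = d * y" for x y d :: 'a
    by (metis that mult.assoc)
  thus ?thesis
    unfolding division_subring_def commutant_def
    by (auto simp: distrib_left distrib_right mult_commute_imp_mult_inverse_commute)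
qed

lemma center_subset: "center E \<subseteq> E"
  unfolding center_def by blast

lemma center_eq_Int_commutant: "center E = E \<inter> commutant E"
  unfolding center_def commutant_def by auto

lemma center_subset_center_commutant: "center D \<subseteq> center (commutant D)"
proof
  fix x assume x: "x \<in> center D"
  show "x \<in> center (commutant D)"
    unfolding center_def
  proof (intro CollectI conjI ballI)
    show "x \<in> commutant D" using x unfolding center_def commutant_def by simp
    fix c assume "c \<in> commutant D"
    hence "c * x = x * c" using x unfolding center_def commutant_def by simp
    thus "x * c = c * x" by simp
  qed
qed

lemma center_UNIV_subset_commutant: "center UNIV \<subseteq> commutant A"
  unfolding center_def commutant_def by auto

lemma center_UNIV_subset_center: "center UNIV \<subseteq> E \<Longrightarrow> center UNIV \<subseteq> center E"
  unfolding center_def by blast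

lemma division_subring_center: "division_subring E \<Longrightarrow> division_subring (center E)"
  unfolding center_eq_Int_commutant
  by (rule division_subring_Inter[of "{E, commutant E}", simplified])
    (auto simp: division_subring_commutant)

lemma subfield_if_commutative:
  assumes K: "division_subring K" and comm: "\<And>x y. x \<in> K \<Longrightarrow> y \<in> K \<Longrightarrow> x * y = y * x"
  shows "subfield K DR"
proof (rule R.subfieldI)
  show "subcring K DR"
    by (rule R.subcringI[OF division_subring_imp_subring[OF K]]) (simp add: comm)
  have "x \<in> Units (DR\<lparr>carrier := K\<rparr>)" if "x \<in> K" "x \<noteq> 0" for x
  proof -
    have "inverse x \<in> K" using K that(1) unfolding division_subring_def by blast
    thus ?thesis
      unfolding Units_def using that by (auto intro!: bexI[where x="inverse x"])
  qed
  moreover have "Units (DR\<lparr>carrier := K\<rparr>) \<subseteq> K - {0}"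
    unfolding Units_def by auto
  ultimately show "Units (DR\<lparr>carrier := K\<rparr>) = K - {\<zero>\<^bsub>DR\<^esub>}" by auto
qed

lemma subfield_center:
  assumes "division_subring E" shows "subfield (center E) DR"
proof (rule subfield_if_commutative[OF division_subring_center[OF assms]])
  fix x y assume "x \<in> center E" "y \<in> center E"
  thus "x * y = y * x" unfolding center_def by blast
qed

lemma subfield_imp_division_subring:
  assumes K: "subfield K DR" shows "division_subring K"
proof -
  have "inverse k \<in> K" if "k \<in> K" for k
  proof (cases "k = 0")
    case False
    hence "inv\<^bsub>DR\<^esub> k \<in> K" "k * inv\<^bsub>DR\<^esub> k = 1"
      using R.subfield_m_inv[OF K] that by auto
    thus ?thesis using inverse_unique by metis
  qed (use subringE(2)[OF subfieldE(1)[OF K]] in simp)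
  thus ?thesis
    using subringE(2-7)[OF subfieldE(1)[OF K]] unfolding division_subring_def by simp
qed

subsection \<open>Linear combinations as finite sums\<close>

lemma combine_eq_sum:
  "R.combine Ks Us =
     (\<Sum>i<length Us. (if i < length Ks then Ks ! i else 0) * (Us ! i :: 'a::division_ring))"
proof (induct Us arbitrary: Ks)
  case Nil
  then show ?case by (cases Ks) auto
next
  case (Cons u Us)
  show ?case
  proof (cases Ks)
    case (Cons k Ks')
    have "R.combine (k # Ks') (u # Us) = k * u + R.combine Ks' Us" by simp
    also have "\<dots> = (\<Sum>i<length (u # Us).
        (if i < length (k # Ks') then (k # Ks') ! i else 0) * (u # Us) ! i)"
      unfolding Cons.hyps length_Cons sum.lessThan_Suc_shift by (simp cong: if_cong)
    finally show ?thesis unfolding \<open>Ks = k # Ks'\<close> .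
  qed simp
qed

lemma combine_exp_base:
  "length Ks = m \<Longrightarrow>
     R.combine Ks (R.exp_base x m) = (\<Sum>i<m. rev Ks ! i * (x::'a::division_ring) ^ i)"
proof (induct Ks arbitrary: m)
  case Nil
  then show ?case by (simp add: R.exp_base_def)
next
  case (Cons k Ks)
  then obtain m' where m: "m = Suc m'" "length Ks = m'" by auto
  have "R.combine (k # Ks) (R.exp_base x m) = k * x ^ m' + (\<Sum>i<m'. rev Ks ! i * x ^ i)"
    using Cons m by (simp add: R.exp_base_def)
  also have "(\<Sum>i<m'. rev Ks ! i * x ^ i) = (\<Sum>i<m'. rev (k # Ks) ! i * x ^ i)"
    by (rule sum.cong) (auto simp: nth_append m)
  also have "k * x ^ m' + \<dots> = (\<Sum>i<m. rev (k # Ks) ! i * x ^ i)"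
    using m by (simp add: nth_append add.commute)
  finally show ?case .
qed

lemma combine_eq_sum_over_set:
  assumes K: "division_subring K" and Ks: "set Ks \<subseteq> K"
  obtains c where "\<And>b. c b \<in> K" "R.combine Ks Us = (\<Sum>b\<in>set Us. c b * b)"
proof
  define f where "f i = (if i < length Ks then Ks ! i else 0)" for i
  define c where "c b = (\<Sum>i | i \<in> {..<length Us} \<and> Us ! i = b. f i)" for b
  have "f i \<in> K" for i
    using Ks K unfolding f_def division_subring_def by auto
  thus "c b \<in> K" for b
    unfolding c_def by (rule division_subring_sum[OF K])
  have "R.combine Ks Us = (\<Sum>i<length Us. f i * Us ! i)"
    unfolding combine_eq_sum f_def ..
  also have "\<dots> = (\<Sum>b\<in>set Us. \<Sum>i | i \<in> {..<length Us} \<and> Us ! i = b. f i * Us ! i)"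
    by (rule sum.group[symmetric]) auto
  also have "\<dots> = (\<Sum>b\<in>set Us. c b * b)"
    unfolding c_def sum_distrib_right by (intro sum.cong refl) auto
  finally show "R.combine Ks Us = (\<Sum>b\<in>set Us. c b * b)" .
qed

lemma sum_in_Span:
  assumes K: "subfield K DR" and "\<And>b. b \<in> B \<Longrightarrow> c b \<in> K" "B \<subseteq> set Us"
  shows "(\<Sum>b\<in>B. c b * b) \<in> R.Span K Us"
proof -
  have Us: "set Us \<subseteq> carrier DR" by simp
  have "finite B" using assms(3) finite_subset by blast
  thus ?thesis using assms(2,3)
  proof (induct B)
    case empty
    show ?case using R.Span_subgroup_props(2)[OF K Us] by simp
  next
    case (insert b B)
    have "c b \<otimes>\<^bsub>DR\<^esub> b \<in> R.Span K Us"
      using insert.prems R.Span_smult_closed[OF K Us] R.Span_base_incl[OF K Us] by blast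
    thus ?case
      using insert R.Span_subgroup_props(3)[OF K Us] by simp
  qed
qed

lemma fin_dim_over_iff_finite_dimension:
  assumes K: "subfield K DR" and E: "division_subring E" "K \<subseteq> E"
  shows "fin_dim_over K E \<longleftrightarrow> R.finite_dimension K E"
proof
  assume "fin_dim_over K E"
  then obtain B where B: "finite B" "B \<subseteq> E"
    "\<forall>a\<in>E. \<exists>c. (\<forall>b\<in>B. c b \<in> K) \<and> a = (\<Sum>b\<in>B. c b * b)"
    unfolding fin_dim_over_def by blast
  obtain Us where Us: "set Us = B" using finite_list[OF B(1)] by blast
  have "E \<subseteq> R.Span K Us"
    using B(3) sum_in_Span[OF K] Us by fastforce
  moreover have "R.Span K Us \<subseteq> E"
    using R.subalgebra_Span_incl[OF K division_subring_imp_subalgebra[OF E]] Us B(2) by simp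
  ultimately show "R.finite_dimension K E"
    using R.Span_finite_dimension[OF K, of Us] by (simp add: subset_antisym)
next
  assume "R.finite_dimension K E"
  then obtain n where "R.dimension n K E" by auto
  then obtain Vs where Vs: "R.Span K Vs = E"
    using R.exists_base[OF K] by blast
  have "\<exists>c. (\<forall>b\<in>set Vs. c b \<in> K) \<and> a = (\<Sum>b\<in>set Vs. c b * b)" if a: "a \<in> E" for a
  proof -
    obtain Ks where Ks: "set Ks \<subseteq> K" "a = R.combine Ks Vs"
      using a R.Span_mem_iff_length_version[OF K, of Vs a] Vs by auto
    obtain c where "\<And>b. c b \<in> K" "R.combine Ks Vs = (\<Sum>b\<in>set Vs. c b * b)"
      using combine_eq_sum_over_set[OF subfield_imp_division_subring[OF K] Ks(1), where Us=Vs] by blast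
    thus ?thesis using Ks(2) by metis
  qed
  moreover have "set Vs \<subseteq> E" using R.Span_base_incl[OF K, of Vs] Vs by simp
  ultimately show "fin_dim_over K E"
    unfolding fin_dim_over_def by blast
qed

definition indep_family :: "'a::division_ring set \<Rightarrow> (nat \<Rightarrow> 'a) \<Rightarrow> nat \<Rightarrow> bool" where
  "indep_family K u m \<longleftrightarrow>
     (\<forall>f. (\<forall>i<m. f i \<in> K) \<longrightarrow> (\<Sum>i<m. f i * u i) = 0 \<longrightarrow> (\<forall>i<m. f i = 0))"

lemma independent_iff_indep_family:
  assumes K: "subfield K DR"
  shows "R.independent K Us \<longleftrightarrow> indep_family K (\<lambda>i. Us ! i) (length Us)"
proof
  assume ind: "R.independent K Us"
  show "indep_family K (\<lambda>i. Us ! i) (length Us)" unfolding indep_family_def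
  proof (intro allI impI)
    fix f i assume f: "\<forall>i<length Us. f i \<in> K" "(\<Sum>i<length Us. f i * Us ! i) = 0" "i < length Us"
    let ?Ks = "map f [0..<length Us]"
    have "R.combine ?Ks Us = \<zero>\<^bsub>DR\<^esub>"
      using f(2) unfolding combine_eq_sum by simp
    moreover have "set ?Ks \<subseteq> K" using f(1) by auto
    ultimately have "set (take (length Us) ?Ks) \<subseteq> {\<zero>\<^bsub>DR\<^esub>}"
      using R.independent_imp_trivial_combine[OF K ind] by blast
    thus "f i = 0" using f(3) by (auto simp: image_subset_iff)
  qed
next
  assume ind: "indep_family K (\<lambda>i. Us ! i) (length Us)"
  have K0: "0 \<in> K" using subringE(2)[OF subfieldE(1)[OF K]] by simp
  show "R.independent K Us"
  proof (rule R.trivial_combine_imp_independent[OF K])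
    show "set Us \<subseteq> carrier DR" by simp
    fix Ks assume Ks: "set Ks \<subseteq> K" "R.combine Ks Us = \<zero>\<^bsub>DR\<^esub>"
    define f where "f i = (if i < length Ks then Ks ! i else 0)" for i
    have "\<forall>i<length Us. f i \<in> K" using Ks(1) K0 unfolding f_def by auto
    moreover have "(\<Sum>i<length Us. f i * Us ! i) = 0"
      using Ks(2) unfolding combine_eq_sum f_def by simp
    ultimately have "\<forall>i<length Us. f i = 0" using ind unfolding indep_family_def by blast
    thus "set (take (length Us) Ks) \<subseteq> {\<zero>\<^bsub>DR\<^esub>}"
      unfolding f_def by (fastforce simp: in_set_conv_nth)
  qed
qed

subsection \<open>Algebraic elements\<close>

lemma algebraic_over_if_finite_dimension:
  assumes K: "subfield K DR" and E: "division_subring E" "R.finite_dimension K E" and x: "x \<in> E"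
  shows "algebraic_over K x"
proof -
  obtain n where n: "R.dimension n K E" using E(2) by auto
  let ?Us = "R.exp_base x (Suc n)"
  have Us: "set ?Us \<subseteq> E"
    using division_subring_power[OF E(1) x] by (auto simp: R.exp_base_def)
  hence "\<not> R.independent K ?Us"
    using R.independent_length_le_dimension[OF K n _ Us] by (auto simp: R.exp_base_def)
  then obtain Ks where Ks: "length Ks = Suc n" "R.combine Ks ?Us = 0" "set Ks \<subseteq> K" "set Ks \<noteq> {0}"
    using R.dependent_imp_non_trivial_combine[OF K, of ?Us] by (auto simp: R.exp_base_def)
  define c where "c i = rev Ks ! i" for i
  have "(\<Sum>i\<le>n. c i * x ^ i) = 0"
    using combine_exp_base[OF Ks(1), of x] Ks(2) unfolding c_def by (simp add: lessThan_Suc_atMost)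
  moreover have "c i \<in> K" if "i \<le> n" for i
  proof -
    have "c i \<in> set (rev Ks)" unfolding c_def using Ks(1) that by (intro nth_mem) simp
    thus ?thesis using Ks(3) by auto
  qed
  moreover have "\<exists>i\<le>n. c i \<noteq> 0"
  proof -
    have "set Ks \<noteq> {}" using Ks(1) by auto
    hence "\<not> set Ks \<subseteq> {0}" using Ks(4) by (simp add: subset_singleton_iff)
    then obtain y where y: "y \<in> set Ks" "y \<noteq> 0" by auto
    then obtain i where "i < length (rev Ks)" "rev Ks ! i = y"
      by (metis in_set_conv_nth set_rev)
    thus ?thesis using y Ks(1) unfolding c_def by (intro exI[of _ i]) auto
  qed
  ultimately show ?thesis unfolding algebraic_over_def by blast
qed

lemma algebraic_over_imp_algebraic:
  assumes "algebraic_over K x"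
  shows "(R.algebraic over K) x"
proof -
  obtain n c where c: "\<forall>i\<le>n. c i \<in> K" "\<exists>i\<le>n. c i \<noteq> 0" "(\<Sum>i\<le>n. c i * x ^ i) = 0"
    using assms unfolding algebraic_over_def by blast
  define Ks where "Ks = rev (map c [0..<Suc n])"
  have "R.eval Ks x = R.combine Ks (R.exp_base x (length Ks))"
    by (rule R.combine_eq_eval[symmetric])
  also have "\<dots> = (\<Sum>i<Suc n. c i * x ^ i)"
    using combine_exp_base[of Ks "Suc n" x] unfolding Ks_def
    by (auto simp: nth_append simp del: upt_Suc intro!: sum.cong)
  finally have "R.eval (R.normalize Ks) x = \<zero>\<^bsub>DR\<^esub>"
    using c(3) R.eval_normalize[of Ks x] by (simp add: lessThan_Suc_atMost)
  moreover have "R.normalize Ks \<noteq> []"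
  proof
    assume "R.normalize Ks = []"
    hence "Ks = replicate (length Ks) 0"
      using R.normalize_trick[of Ks] by simp
    hence "set Ks \<subseteq> {0}" by (metis set_replicate_conv_if empty_subsetI order_refl)
    moreover obtain i where "i \<le> n" "c i \<noteq> 0" using c(2) by blast
    moreover have "c i \<in> set Ks" using \<open>i \<le> n\<close> unfolding Ks_def by (auto simp del: upt_Suc)
    ultimately show False by auto
  qed
  moreover have "set Ks \<subseteq> K" using c(1) unfolding Ks_def by auto
  hence "R.normalize Ks \<in> carrier (K[X]\<^bsub>DR\<^esub>)"
    using R.normalize_gives_polynomial unfolding univ_poly_def by auto
  ultimately show ?thesis using R.algebraicI by blast
qed

lemma locally_finite_imp_algebraic_over:
  assumes lf: "locally_finite TYPE('a::division_ring)"
  shows "algebraic_over (center UNIV) (x::'a)"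
proof (rule algebraic_over_if_finite_dimension)
  let ?Z = "center (UNIV::'a set)" and ?E = "gen_div_subring (center UNIV \<union> {x})"
  show Z: "subfield ?Z DR" by (rule subfield_center[OF division_subring_UNIV])
  show E: "division_subring ?E" by (rule division_subring_gen_div_subring)
  show "x \<in> ?E" using gen_div_subring_incl by blast
  have "fin_dim_over ?Z ?E" using lf unfolding locally_finite_def by blast
  thus "R.finite_dimension ?Z ?E"
    using fin_dim_over_iff_finite_dimension[OF Z E] gen_div_subring_incl by blast
qed

subsection \<open>Independence over the centre of a division subring\<close>

lemma commutator_combination:
  assumes "(\<Sum>j<p. \<delta> j * c j) = 0" "\<And>j. j < p \<Longrightarrow> c j * x = x * c j"
  shows "(\<Sum>j<p. (x * \<delta> j - \<delta> j * x) * c j) = (0::'a::division_ring)"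
proof -
  have "(x * \<delta> j - \<delta> j * x) * c j = x * (\<delta> j * c j) - (\<delta> j * c j) * x" if "j < p" for j
    using assms(2)[OF that] by (simp add: left_diff_distrib mult.assoc)
  hence "(\<Sum>j<p. (x * \<delta> j - \<delta> j * x) * c j) =
      x * (\<Sum>j<p. \<delta> j * c j) - (\<Sum>j<p. \<delta> j * c j) * x"
    by (simp add: sum_subtractf sum_distrib_left sum_distrib_right)
  thus ?thesis using assms(1) by simp
qed

lemma indep_family_center_imp_indep_family:
  assumes D: "division_subring D" and cD: "\<And>j. j < p \<Longrightarrow> c j \<in> commutant D"
    and ind: "indep_family (center D) c p"
  shows "indep_family D c p"
proof -
  have "\<forall>j<p. \<delta> j = 0" if "\<forall>j<p. \<delta> j \<in> D" "(\<Sum>j<p. \<delta> j * c j) = 0" for \<delta>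
    using that
  proof (induction "card {j. j < p \<and> \<delta> j \<noteq> 0}" arbitrary: \<delta> rule: less_induct)
    case less
    show ?case
    proof (rule ccontr)
      assume "\<not> (\<forall>j<p. \<delta> j = 0)"
      then obtain j0 where j0: "j0 < p" "\<delta> j0 \<noteq> 0" by auto
      define \<delta>' where "\<delta>' j = inverse (\<delta> j0) * \<delta> j" for j
      have \<delta>'D: "\<forall>j<p. \<delta>' j \<in> D"
        using D less.prems(1) j0(1) unfolding \<delta>'_def division_subring_def by blast
      have \<delta>'_rel: "(\<Sum>j<p. \<delta>' j * c j) = 0"
        using less.prems(2) unfolding \<delta>'_def by (simp add: mult.assoc sum_distrib_left[symmetric])
      have "\<delta>' j \<in> center D" if j: "j < p" for j
        unfolding center_def
      proof (intro CollectI conjI ballI)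
        show "\<delta>' j \<in> D" using \<delta>'D j by blast
        fix x assume x: "x \<in> D"
        define \<epsilon> where "\<epsilon> i = x * \<delta>' i - \<delta>' i * x" for i
        have "\<epsilon> i \<in> D" if "i < p" for i
          using division_subringD(4,7)[OF D] x \<delta>'D that unfolding \<epsilon>_def by simp
        hence "\<forall>i<p. \<epsilon> i \<in> D" by blast
        moreover have "(\<Sum>i<p. \<epsilon> i * c i) = 0"
          unfolding \<epsilon>_def
          by (rule commutator_combination[OF \<delta>'_rel]) (use cD x in \<open>auto simp: commutant_def\<close>)
        moreover have "\<epsilon> j0 = 0" "\<And>i. \<delta> i = 0 \<Longrightarrow> \<epsilon> i = 0"
          using j0(2) unfolding \<epsilon>_def \<delta>'_def by simp_all
        hence "{i. i < p \<and> \<epsilon> i \<noteq> 0} \<subset> {i. i < p \<and> \<delta> i \<noteq> 0}"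
          using j0 by blast
        hence "card {i. i < p \<and> \<epsilon> i \<noteq> 0} < card {i. i < p \<and> \<delta> i \<noteq> 0}"
          by (rule psubset_card_mono[rotated]) simp
        ultimately have "\<forall>i<p. \<epsilon> i = 0" by (rule less.hyps[rotated])
        thus "\<delta>' j * x = x * \<delta>' j" using j unfolding \<epsilon>_def by simp
      qed
      hence "\<forall>j<p. \<delta>' j = 0" using ind \<delta>'_rel unfolding indep_family_def by blast
      thus False using j0 unfolding \<delta>'_def by simp
    qed
  qed
  thus ?thesis unfolding indep_family_def by blast
qed

lemma Span_coordinates:
  assumes F: "subfield F DR" and k: "\<And>i. i < m \<Longrightarrow> k i \<in> R.Span F Cs"
  obtains f where "\<And>i j. i < m \<Longrightarrow> j < length Cs \<Longrightarrow> f i j \<in> F"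
    "\<And>i. i < m \<Longrightarrow> k i = (\<Sum>j<length Cs. f i j * Cs ! j)"
proof -
  have "\<exists>Fs. i < m \<longrightarrow> set Fs \<subseteq> F \<and> length Fs = length Cs \<and> k i = R.combine Fs Cs" for i
    using k R.Span_mem_iff_length_version[OF F, of Cs "k i"] by auto
  then obtain G where G: "\<And>i. i < m \<Longrightarrow> set (G i) \<subseteq> F \<and> length (G i) = length Cs \<and> k i = R.combine (G i) Cs"
    by metis
  show ?thesis
  proof (rule that[of "\<lambda>i j. G i ! j"])
    show "G i ! j \<in> F" if "i < m" "j < length Cs" for i j
      using G[OF that(1)] that(2) by auto
    show "k i = (\<Sum>j<length Cs. G i ! j * Cs ! j)" if "i < m" for i
      using G[OF that] unfolding combine_eq_sum by simp
  qed
qed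

lemma indep_family_center_imp_center_UNIV:
  assumes D: "division_subring D" and u: "\<And>i. i < m \<Longrightarrow> u i \<in> D"
    and ind: "indep_family (center D) u m"
  shows "indep_family (center UNIV) u m"
  unfolding indep_family_def
proof (intro allI impI)
  fix k i0 assume kZ: "\<forall>i<m. k i \<in> center UNIV" and rel: "(\<Sum>i<m. k i * u i) = 0"
    and i0: "i0 < m"
  let ?F = "center D"
  have F: "subfield ?F DR" by (rule subfield_center[OF D])
  let ?Ks = "map k [0..<m]"
  obtain Cs where Cs: "R.independent ?F Cs" "R.Span ?F Cs = R.Span ?F ?Ks"
    using R.filter_base[OF F, of ?Ks] by auto
  have "R.Span ?F ?Ks \<subseteq> commutant D"
  proof (rule R.subalgebra_Span_incl[OF F division_subring_imp_subalgebra])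
    show "division_subring (commutant D)" by (rule division_subring_commutant)
    show "?F \<subseteq> commutant D" "set ?Ks \<subseteq> commutant D"
      using kZ unfolding center_def commutant_def by auto
  qed
  hence CsD: "Cs ! j \<in> commutant D" if "j < length Cs" for j
    using that Cs(2) R.Span_base_incl[OF F, of Cs] by (simp add: subset_iff)
  have indD: "indep_family D (\<lambda>j. Cs ! j) (length Cs)"
    using indep_family_center_imp_indep_family[OF D, where c="\<lambda>j. Cs ! j" and p="length Cs"]
      CsD Cs(1) independent_iff_indep_family[OF F] by blast
  obtain f where f: "\<And>i j. i < m \<Longrightarrow> j < length Cs \<Longrightarrow> f i j \<in> ?F"
    "\<And>i. i < m \<Longrightarrow> k i = (\<Sum>j<length Cs. f i j * Cs ! j)"
    by (rule Span_coordinates[OF F, of m k Cs]) (use Cs(2) R.Span_base_incl[OF F, of ?Ks] in auto)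
  define \<delta> where "\<delta> j = (\<Sum>i<m. f i j * u i)" for j
  have "(\<Sum>j<length Cs. \<delta> j * Cs ! j) = (\<Sum>i<m. \<Sum>j<length Cs. f i j * Cs ! j * u i)"
    unfolding \<delta>_def sum_distrib_right using CsD u
    by (subst sum.swap) (auto simp: commutant_def mult.assoc intro!: sum.cong)
  also have "\<dots> = 0"
    using rel f(2) by (simp add: sum_distrib_right)
  finally have \<delta>_rel: "(\<Sum>j<length Cs. \<delta> j * Cs ! j) = 0" .
  have "\<forall>j<length Cs. \<delta> j \<in> D"
    unfolding \<delta>_def using f(1) u center_subset
    by (blast intro: division_subring_sum[OF D] division_subringD(4)[OF D])
  hence "\<delta> j = 0" if "j < length Cs" for j
    using indD[unfolded indep_family_def, rule_format, OF _ \<delta>_rel that] by blast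
  hence "f i j = 0" if "i < m" "j < length Cs" for i j
    using ind[unfolded indep_family_def, rule_format, of "\<lambda>i. f i j"] f(1) that
    unfolding \<delta>_def by blast
  thus "k i0 = 0" using f(2)[OF i0] i0 by simp
qed

lemma finite_dimension_if_independent_length_bounded:
  assumes K: "subfield K DR" and V: "subalgebra K V DR"
    and bound: "\<And>Us. set Us \<subseteq> V \<Longrightarrow> R.independent K Us \<Longrightarrow> length Us \<le> n"
  shows "R.finite_dimension K V"
proof -
  define I where "I = {Us. set Us \<subseteq> V \<and> R.independent K Us}"
  have "length ` I \<subseteq> {..n}"
    using bound unfolding I_def by fastforce
  hence fin: "finite (length ` I)"
    using finite_subset by blast
  have "[] \<in> I" unfolding I_def by simp
  hence "Max (length ` I) \<in> length ` I" using Max_in[OF fin] by blast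
  then obtain Us where Us: "Us \<in> I" "length Us = Max (length ` I)" by force
  have greatest: "length Vs \<le> length Us" if "Vs \<in> I" for Vs
    using Max_ge[OF fin] that Us(2) by simp
  have "V \<subseteq> R.Span K Us"
  proof
    fix v assume v: "v \<in> V"
    show "v \<in> R.Span K Us"
    proof (rule ccontr)
      assume "v \<notin> R.Span K Us"
      hence "v # Us \<in> I"
        using Us v R.li_Cons[of v K Us] unfolding I_def by simp
      thus False using greatest[of "v # Us"] by simp
    qed
  qed
  moreover have "R.Span K Us \<subseteq> V"
    using R.subalgebra_Span_incl[OF K V] Us unfolding I_def by blast
  ultimately show ?thesis
    using R.Span_finite_dimension[OF K, of Us] by (simp add: subset_antisym)
qed

lemma locally_finite_imp_fin_dim_over_center:
  assumes lf: "locally_finite TYPE('a::division_ring)" and S: "finite (S::'a set)"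
  shows "fin_dim_over (center (gen_div_subring S)) (gen_div_subring S)"
proof -
  let ?Z = "center (UNIV::'a set)" and ?D = "gen_div_subring S"
  let ?L = "gen_div_subring (?Z \<union> S)" and ?F = "center ?D"
  have Z: "subfield ?Z DR" and F: "subfield ?F DR"
    by (rule subfield_center[OF division_subring_UNIV], rule subfield_center[OF division_subring_gen_div_subring])
  have D: "division_subring ?D" and L: "division_subring ?L"
    by (rule division_subring_gen_div_subring)+
  have "fin_dim_over ?Z ?L" using lf S unfolding locally_finite_def by auto
  hence "R.finite_dimension ?Z ?L"
    using fin_dim_over_iff_finite_dimension[OF Z L] gen_div_subring_incl by blast
  then obtain n where n: "R.dimension n ?Z ?L" by auto
  have "length Us \<le> n" if Us: "set Us \<subseteq> ?D" "R.independent ?F Us" for Us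
  proof -
    have "indep_family ?Z (\<lambda>i. Us ! i) (length Us)"
      by (rule indep_family_center_imp_center_UNIV[OF D])
        (use Us independent_iff_indep_family[OF F] in auto)
    moreover have "set Us \<subseteq> ?L" using Us(1) gen_div_subring_mono[of S "?Z \<union> S"] by auto
    ultimately show ?thesis
      using R.independent_length_le_dimension[OF Z n] independent_iff_indep_family[OF Z] by blast
  qed
  hence "R.finite_dimension ?F ?D"
    using finite_dimension_if_independent_length_bounded[OF F
        division_subring_imp_subalgebra[OF D]] center_def by blast
  thus ?thesis
    using fin_dim_over_iff_finite_dimension[OF F D] center_def by blast
qed

subsection \<open>Finite-dimensional subalgebras\<close>

lemma combine_in_subalgebra:
  assumes K: "subfield K DR" and V: "subalgebra K V DR" and "set Ks \<subseteq> K" "set Us \<subseteq> V"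
  shows "R.combine Ks Us \<in> V"
  using R.subalgebra_Span_incl[OF K V assms(4)] R.Span_eq_combine_set[OF K, of Us] assms(3) by auto

lemma combine_mult_right_in_subalgebra:
  assumes K: "subfield K DR" and V: "subalgebra K V DR" and "set Ks \<subseteq> K"
    and "\<And>u. u \<in> set Us \<Longrightarrow> u * b \<in> V"
  shows "R.combine Ks Us * b \<in> V"
proof -
  have "R.combine Ks Us * b = R.combine Ks (map (\<lambda>u. u * b) Us)"
    by (induct Ks Us rule: R.combine.induct) (simp_all add: distrib_right mult.assoc)
  moreover have "set (map (\<lambda>u. u * b) Us) \<subseteq> V" using assms(4) by auto
  ultimately show ?thesis using combine_in_subalgebra[OF K V assms(3)] by simp
qed

lemma mult_combine_left_in_subalgebra:
  assumes K: "subfield K DR" and V: "subalgebra K V DR" and "set Ks \<subseteq> K"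
    and "\<And>u. u \<in> set Us \<Longrightarrow> v * u \<in> V" and "\<And>k. k \<in> K \<Longrightarrow> v * k = k * v"
  shows "v * R.combine Ks Us \<in> V"
proof -
  have "v * R.combine Ks Us = R.combine Ks (map (\<lambda>u. v * u) Us)"
    using assms(3,5)
    by (induct Ks Us rule: R.combine.induct) (auto simp: distrib_left mult.assoc[symmetric])
  moreover have "set (map (\<lambda>u. v * u) Us) \<subseteq> V" using assms(4) by auto
  ultimately show ?thesis using combine_in_subalgebra[OF K V assms(3)] by simp
qed

lemma Span_mult_closed:
  assumes A: "subfield A DR"
    and comm: "\<And>a v. a \<in> A \<Longrightarrow> v \<in> R.Span A bs \<Longrightarrow> v * a = a * v"
    and prod: "\<And>b b'. b \<in> set bs \<Longrightarrow> b' \<in> set bs \<Longrightarrow> b * b' \<in> R.Span A bs"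
    and v: "v \<in> R.Span A bs" and w: "w \<in> R.Span A bs"
  shows "v * w \<in> R.Span A bs"
proof -
  have V: "subalgebra A (R.Span A bs) DR" by (rule R.Span_is_subalgebra[OF A]) simp
  have "v * b \<in> R.Span A bs" if b: "b \<in> set bs" and v: "v \<in> R.Span A bs" for v b
  proof -
    obtain Ks where "set Ks \<subseteq> A" "v = R.combine Ks bs"
      using v R.Span_mem_iff_length_version[OF A, of bs v] by auto
    thus ?thesis using combine_mult_right_in_subalgebra[OF A V] prod b by blast
  qed
  moreover obtain Ks where "set Ks \<subseteq> A" "w = R.combine Ks bs"
    using w R.Span_mem_iff_length_version[OF A, of bs w] by auto
  ultimately show ?thesis
    using mult_combine_left_in_subalgebra[OF A V] comm v by metis
qed

lemma independent_mult_left: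
  assumes K: "subfield K DR" "K \<subseteq> center UNIV" and x: "x \<noteq> 0"
    and ind: "R.independent K Vs"
  shows "R.independent K (map (\<lambda>v. x * v) Vs)"
proof -
  have "\<forall>i<length Vs. f i = 0"
    if f: "\<forall>i<length Vs. f i \<in> K" "(\<Sum>i<length Vs. f i * (x * Vs ! i)) = 0" for f
  proof -
    have "(\<Sum>i<length Vs. f i * (x * Vs ! i)) = x * (\<Sum>i<length Vs. f i * Vs ! i)"
      unfolding sum_distrib_left using f(1) K(2)
      by (intro sum.cong refl) (auto simp: center_def mult.assoc[symmetric])
    hence "(\<Sum>i<length Vs. f i * Vs ! i) = 0" using f(2) x by simp
    thus ?thesis
      using ind independent_iff_indep_family[OF K(1)] f(1) unfolding indep_family_def by blast
  qed
  thus ?thesis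
    using independent_iff_indep_family[OF K(1)] unfolding indep_family_def by simp
qed

text \<open>Left multiplication by a nonzero x maps a basis of V to a basis, so 1 lies in x V.\<close>

lemma division_subring_if_finite_dimension:
  assumes K: "subfield K DR" "K \<subseteq> center UNIV" and V: "subalgebra K V DR"
    and fd: "R.finite_dimension K V" and one: "1 \<in> V"
    and mult: "\<And>x y. x \<in> V \<Longrightarrow> y \<in> V \<Longrightarrow> x * y \<in> V"
  shows "division_subring V"
proof -
  have "inverse x \<in> V" if x: "x \<in> V" "x \<noteq> 0" for x
  proof -
    obtain n where n: "R.dimension n K V" using fd by auto
    then obtain Vs where Vs: "R.independent K Vs" "length Vs = n" "R.Span K Vs = V"
      using R.exists_base[OF K(1)] by blast
    have sVs: "set Vs \<subseteq> V" using R.Span_base_incl[OF K(1), of Vs] Vs(3) by simp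
    let ?Ys = "map (\<lambda>v. x * v) Vs"
    have "R.Span K ?Ys = V"
      using R.independent_length_eq_dimension[OF K(1) n independent_mult_left[OF K x(2) Vs(1)]]
        sVs mult x(1) Vs(2) by auto
    then obtain Ks where Ks: "set Ks \<subseteq> K" "1 = R.combine Ks ?Ys"
      using one R.Span_mem_iff_length_version[OF K(1), of ?Ys 1] by auto
    have "R.combine Ks ?Ys = x * R.combine Ks Vs"
      using Ks(1) K(2) unfolding center_def
      by (induct Ks Vs rule: R.combine.induct) (auto simp: distrib_left mult.assoc[symmetric])
    hence "inverse x = R.combine Ks Vs"
      using Ks(2) inverse_unique by metis
    thus ?thesis using combine_in_subalgebra[OF K(1) V Ks(1) sVs] by simp
  qed
  moreover note subgroup = subalgebra.axioms(1)[OF V]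
  have "0 \<in> V" using subgroup.one_closed[OF subgroup] by simp
  moreover have "x + y \<in> V" if "x \<in> V" "y \<in> V" for x y
    using subgroup.m_closed[OF subgroup that] by simp
  moreover have "- x \<in> V" if "x \<in> V" for x
  proof -
    have "\<ominus>\<^bsub>DR\<^esub> x \<in> V"
      unfolding a_inv_def using subgroup.m_inv_closed[OF subgroup that] .
    thus ?thesis by simp
  qed
  ultimately show ?thesis
    unfolding division_subring_def using one mult by (metis inverse_zero)
qed

lemma finite_extension_in_subfield:
  assumes Q: "subfield Q DR" and Z: "subfield Z DR" "Z \<subseteq> Q" and gs: "set gs \<subseteq> Q"
    and alg: "\<And>g. g \<in> set gs \<Longrightarrow> algebraic_over Z g"
  obtains A where "subfield A DR" "Z \<subseteq> A" "set gs \<subseteq> A" "A \<subseteq> Q" "R.finite_dimension Z A"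
proof -
  define RQ where "RQ = DR\<lparr>carrier := Q\<rparr>"
  interpret Qf: field RQ unfolding RQ_def by (rule R.subfield_iff(2)[OF Q])
  have subQ: "subring Q DR" by (rule subfieldE(1)[OF Q])
  have restrict: "RQ\<lparr>carrier := K\<rparr> = DR\<lparr>carrier := K\<rparr>" for K unfolding RQ_def by simp
  have ZQ: "subfield Z RQ"
    by (rule Qf.subfield_iff(1)) (use R.subfield_iff(2)[OF Z(1)] Z(2) in \<open>simp_all add: restrict RQ_def\<close>)
  have gsQ: "set gs \<subseteq> carrier RQ" using gs unfolding RQ_def by simp
  have galg: "(Qf.algebraic over Z) g" if "g \<in> set gs" for g
    using algebraic_over_imp_algebraic[OF alg[OF that]]
    unfolding over_def RQ_def R.transcendental_consistent[OF subQ] .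
  define A where "A = Qf.finite_extension Z gs"
  have sAQ: "subfield A RQ" unfolding A_def by (rule Qf.finite_extension_is_subfield[OF ZQ gsQ galg])
  show ?thesis
  proof (rule that[of A])
    show "A \<subseteq> Q" using subfieldE(3)[OF sAQ] unfolding RQ_def by simp
    show "subfield A DR"
      by (rule R.subfield_iff(1)) (use Qf.subfield_iff(2)[OF sAQ] in \<open>simp_all add: restrict\<close>)
    show "Z \<subseteq> A" unfolding A_def
      by (rule Qf.finite_extension_incl) (use Z(2) gsQ in \<open>auto simp: RQ_def\<close>)
    show "set gs \<subseteq> A" unfolding A_def
      by (rule Qf.finite_extension_mem[OF subfieldE(1)[OF ZQ] gsQ])
    obtain n where "Qf.dimension n Z A"
      using Qf.finite_extension_finite_dimension(1)[OF ZQ gsQ galg] unfolding A_def by auto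
    then obtain Vs where "Qf.Span Z Vs = A" using Qf.exists_base[OF ZQ] by blast
    hence "R.Span Z Vs = A" unfolding RQ_def R.Span_consistent[OF subQ] .
    thus "R.finite_dimension Z A" using R.Span_finite_dimension[OF Z(1), of Vs] by simp
  qed
qed

lemma Span_commutes_with_scalars:
  assumes A: "subfield A DR" "A \<subseteq> center (commutant D)" and bs: "set bs \<subseteq> D"
    and v: "v \<in> R.Span A bs" and a: "a \<in> A"
  shows "v * a = a * v"
proof -
  let ?W = "commutant (center (commutant D))"
  have "A \<subseteq> ?W" "set bs \<subseteq> ?W"
    using A(2) bs unfolding center_def commutant_def by auto
  hence "R.Span A bs \<subseteq> ?W"
    using R.subalgebra_Span_incl[OF A(1) division_subring_imp_subalgebra[OF division_subring_commutant]]
    by blast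
  thus ?thesis using v a A(2) unfolding commutant_def by blast
qed

lemma Span_division_subring:
  assumes A: "subfield A DR" "center UNIV \<subseteq> A" "A \<subseteq> center (commutant D)"
    "R.finite_dimension (center UNIV) A"
    and bs: "set bs \<subseteq> D" and one: "1 \<in> R.Span A bs"
    and prod: "\<And>b b'. b \<in> set bs \<Longrightarrow> b' \<in> set bs \<Longrightarrow> b * b' \<in> R.Span A bs"
  shows "division_subring (R.Span A bs)" "center UNIV \<subseteq> R.Span A bs"
    "R.finite_dimension (center UNIV) (R.Span A bs)"
proof -
  let ?Z = "center (UNIV::'a set)" and ?V = "R.Span A bs"
  have Z: "subfield ?Z DR" by (rule subfield_center[OF division_subring_UNIV])
  have VZ: "subalgebra ?Z ?V DR"
    using R.Span_is_subalgebra[OF A(1), of bs] A(2)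
    unfolding subalgebra_def subalgebra_axioms_def by auto
  show fd: "R.finite_dimension ?Z ?V"
    by (rule R.telescopic_base_dim(1)[OF Z A(1) A(4) R.Span_finite_dimension[OF A(1)]]) simp
  have mult: "v * w \<in> ?V" if "v \<in> ?V" "w \<in> ?V" for v w
    by (rule Span_mult_closed[OF A(1) _ prod that]) (use Span_commutes_with_scalars[OF A(1,3) bs] in auto)
  show "division_subring ?V"
    by (rule division_subring_if_finite_dimension[OF Z order_refl VZ fd one mult])
  show "?Z \<subseteq> ?V"
    using subalgebra.smult_closed[OF VZ _ one] by fastforce
qed

lemma finite_dimensional_division_subring_containing:
  assumes D: "division_subring D" and bs: "R.Span (center D) bs = D"
    and T: "finite T" "T \<subseteq> D" "1 \<in> T" "\<And>b b'. b \<in> set bs \<Longrightarrow> b' \<in> set bs \<Longrightarrow> b * b' \<in> T"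
    and alg: "\<And>x. x \<in> center D \<Longrightarrow> algebraic_over (center UNIV) x"
  obtains V where "division_subring V" "center UNIV \<subseteq> V" "T \<subseteq> V"
    "R.finite_dimension (center UNIV) V"
proof -
  let ?Z = "center (UNIV::'a set)" and ?F = "center D" and ?Q = "center (commutant D)"
  have Z: "subfield ?Z DR" by (rule subfield_center[OF division_subring_UNIV])
  have F: "subfield ?F DR" by (rule subfield_center[OF D])
  have Q: "subfield ?Q DR" by (rule subfield_center[OF division_subring_commutant])
  have ZQ: "?Z \<subseteq> ?Q" by (rule center_UNIV_subset_center[OF center_UNIV_subset_commutant])
  obtain ts where ts: "set ts = T" using finite_list[OF T(1)] by blast
  obtain f where f: "\<And>i j. i < length ts \<Longrightarrow> j < length bs \<Longrightarrow> f i j \<in> ?F"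
    "\<And>i. i < length ts \<Longrightarrow> ts ! i = (\<Sum>j<length bs. f i j * bs ! j)"
    by (rule Span_coordinates[OF F, of "length ts" "\<lambda>i. ts ! i" bs]) (use ts T(2) bs in auto)
  define \<Gamma> where "\<Gamma> = (\<lambda>(i, j). f i j) ` ({..<length ts} \<times> {..<length bs})"
  have "finite \<Gamma>" unfolding \<Gamma>_def by simp
  then obtain gs where gs: "set gs = \<Gamma>" using finite_list by blast
  have "set gs \<subseteq> ?F" using f(1) unfolding gs \<Gamma>_def by auto
  then obtain A where A: "subfield A DR" "?Z \<subseteq> A" "set gs \<subseteq> A" "A \<subseteq> ?Q" "R.finite_dimension ?Z A"
    using finite_extension_in_subfield[OF Q Z ZQ, of gs] center_subset_center_commutant alg by blast
  have TV: "T \<subseteq> R.Span A bs"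
  proof -
    have VA: "subalgebra A (R.Span A bs) DR" by (rule R.Span_is_subalgebra[OF A(1)]) simp
    have "ts ! i \<in> R.Span A bs" if i: "i < length ts" for i
    proof -
      have "ts ! i = R.combine (map (f i) [0..<length bs]) bs"
        unfolding f(2)[OF i] combine_eq_sum by simp
      moreover have "set (map (f i) [0..<length bs]) \<subseteq> A"
        using A(3) i unfolding gs \<Gamma>_def by (auto simp: image_subset_iff)
      ultimately show ?thesis
        using combine_in_subalgebra[OF A(1) VA _ R.Span_base_incl[OF A(1)]] by simp
    qed
    thus ?thesis unfolding ts[symmetric] by (auto simp: in_set_conv_nth)
  qed
  have bsD: "set bs \<subseteq> D" using R.Span_base_incl[OF F, of bs] bs by simp
  show ?thesis
    using Span_division_subring[OF A(1,2,4,5) bsD] T(3,4) TV that by blast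
qed

lemma weakly_locally_finite_algebraic_imp_fin_dim_over:
  assumes wlf: "weakly_locally_finite TYPE('a::division_ring)" and alg: "algebraic_dr TYPE('a)"
    and S: "finite (S::'a set)"
  shows "fin_dim_over (center UNIV) (gen_div_subring (center UNIV \<union> S))"
proof -
  let ?Z = "center (UNIV::'a set)" and ?D = "gen_div_subring S"
  let ?L = "gen_div_subring (?Z \<union> S)"
  have Z: "subfield ?Z DR" by (rule subfield_center[OF division_subring_UNIV])
  have D: "division_subring ?D" and L: "division_subring ?L"
    by (rule division_subring_gen_div_subring)+
  have F: "subfield (center ?D) DR" by (rule subfield_center[OF D])
  have "R.finite_dimension (center ?D) ?D"
    using wlf S fin_dim_over_iff_finite_dimension[OF F D center_subset]
    unfolding weakly_locally_finite_def by blast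
  then obtain n where "R.dimension n (center ?D) ?D" by auto
  then obtain bs where bs: "R.Span (center ?D) bs = ?D" using R.exists_base[OF F] by blast
  have bsD: "set bs \<subseteq> ?D" using R.Span_base_incl[OF F, of bs] bs by simp
  let ?T = "(\<lambda>(b, b'). b * b') ` (set bs \<times> set bs) \<union> {1} \<union> S"
  obtain V where V: "division_subring V" "?Z \<subseteq> V" "?T \<subseteq> V" "R.finite_dimension ?Z V"
  proof (rule finite_dimensional_division_subring_containing[OF D bs])
    show "finite ?T" using S by simp
    show "?T \<subseteq> ?D"
      using bsD gen_div_subring_incl[of S] division_subringD(2,4)[OF D] by (auto simp: subset_iff)
    show "algebraic_over ?Z x" for x
      using alg unfolding algebraic_dr_def by blast
  qed auto
  have "?L \<subseteq> V" by (rule gen_div_subring_minimal[OF V(1)]) (use V(2,3) in auto)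
  hence "R.finite_dimension ?Z ?L"
    using R.subalbegra_incl_imp_finite_dimension[OF Z V(4) division_subring_imp_subalgebra[OF L]]
      gen_div_subring_incl by blast
  thus ?thesis using fin_dim_over_iff_finite_dimension[OF Z L] gen_div_subring_incl by blast
qed

theorem theorem5p2:
  "locally_finite TYPE('a::division_ring) \<longleftrightarrow>
     weakly_locally_finite TYPE('a) \<and> algebraic_dr TYPE('a)"
proof
  assume lf: "locally_finite TYPE('a)"
  have "weakly_locally_finite TYPE('a)"
    unfolding weakly_locally_finite_def using locally_finite_imp_fin_dim_over_center[OF lf] by blast
  moreover have "algebraic_dr TYPE('a)"
    unfolding algebraic_dr_def using locally_finite_imp_algebraic_over[OF lf] by blast
  ultimately show "weakly_locally_finite TYPE('a) \<and> algebraic_dr TYPE('a)" ..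
next
  assume "weakly_locally_finite TYPE('a) \<and> algebraic_dr TYPE('a)"
  thus "locally_finite TYPE('a)"
    unfolding locally_finite_def using weakly_locally_finite_algebraic_imp_fin_dim_over by blast
qed

end
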